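(* In the roundabout exploration process described in the context, for every $t\in[N]$, \[\sum_{a_i\in A(t)}|D_i(t)|\le 2N-|A(t)|.\]
   Context: Let $n\ge 2$ and $k$ be natural numbers, $T$ a tree on an $n$-element vertex set $V$, and $N=2(n-1)$. Fix a root $r$ and a DFS tour of $T$ starting and ending at $r$ that traverses each edge of $T$ exactly twice, giving a cyclic vertex sequence $(v_1,\dots,v_N,v_{N+1})$ with $v_{N+1}=v_1=r$, and tour edges $e_i=\{v_i,v_{i+1}\}$ for $i\in[N]$. For $i,j\in[N]$ the circular interval $[\![i,j]\!]$ is $\{i,i+1,\dots,j\}$ if $i\le j$ and $\{i,\dots,N,1,\dots,j\}$ if $i>j$. Let $\langle G_1,\dots,G_N\rangle$ be graphs on $V$, each containing all but at most $k$ edges of $T$. Roundabout exploration process: agents $a_1,\dots,a_N$ with initial states $s_i(0)=i$. For steps $t=1,\dots,N$: (Movement) for every $i\in[N]$, if $s_i(t-1)=q$ then $s_i(t)=(q\bmod N)+1$ if $e_q\in E(G_t)$, and $s_i(t)=q$ otherwise. Let $D_i(t)=[\![i,s_i(t)]\!]$ and $D_i(0)=\{i\}$. (Elimination) $A(0)=\{a_1,\dots,a_N\}$; $A(t)$ is obtained from $A(t-1)$ by repeatedly removing an arbitrary agent $a_i$ of the current set with $D_i(t)\subseteq\bigcup D_j(t)$ over the other agents $a_j$ of the current set, until no such agent remains. *)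

theory Defs
  imports Main
begin

definition all_edges :: "'a set \<Rightarrow> 'a set set" where
  "all_edges V = {{u, v} | u v. u \<in> V \<and> v \<in> V \<and> u \<noteq> v}"

definition graph_on :: "'a set \<Rightarrow> 'a set set \<Rightarrow> bool" where
  "graph_on V E \<longleftrightarrow> finite V \<and> E \<subseteq> all_edges V"

definition adj_rel :: "'a set set \<Rightarrow> ('a \<times> 'a) set" where
  "adj_rel E = {(x, y). {x, y} \<in> E}"

definition connected_graph :: "'a set \<Rightarrow> 'a set set \<Rightarrow> bool" where
  "connected_graph V E \<longleftrightarrow> (\<forall>u\<in>V. \<forall>w\<in>V. (u, w) \<in> (adj_rel E)\<^sup>*)"

definition is_cycle :: "'a set set \<Rightarrow> 'a list \<Rightarrow> bool" where
  "is_cycle E xs \<longleftrightarrow> length xs \<ge> 3 \<and> distinct xs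
     \<and> (\<forall>i. Suc i < length xs \<longrightarrow> {xs ! i, xs ! Suc i} \<in> E)
     \<and> {last xs, hd xs} \<in> E"

definition tree_on :: "'a set \<Rightarrow> 'a set set \<Rightarrow> bool" where
  "tree_on V E \<longleftrightarrow> graph_on V E \<and> connected_graph V E \<and> (\<nexists>xs. is_cycle E xs)"

definition dfs_tour :: "'a set set \<Rightarrow> 'a \<Rightarrow> nat \<Rightarrow> (nat \<Rightarrow> 'a) \<Rightarrow> bool" where
  "dfs_tour ET r N v \<longleftrightarrow> v 1 = r \<and> v (N + 1) = r
     \<and> (\<forall>i\<in>{1..N}. {v i, v (Suc i)} \<in> ET)
     \<and> (\<forall>e\<in>ET. card {i\<in>{1..N}. {v i, v (Suc i)} = e} = 2)"

definition tour_edge :: "(nat \<Rightarrow> 'a) \<Rightarrow> nat \<Rightarrow> 'a set" where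
  "tour_edge v i = {v i, v (Suc i)}"

fun state :: "nat \<Rightarrow> (nat \<Rightarrow> 'a) \<Rightarrow> (nat \<Rightarrow> 'a set set) \<Rightarrow> nat \<Rightarrow> nat \<Rightarrow> nat" where
  "state N v G i 0 = i"
| "state N v G i (Suc t) =
     (let q = state N v G i t in
      if tour_edge v q \<in> G (Suc t) then (q mod N) + 1 else q)"

definition cint :: "nat \<Rightarrow> nat \<Rightarrow> nat \<Rightarrow> nat set" where
  "cint N i j = (if i \<le> j then {i..j} else {i..N} \<union> {1..j})"

definition Dset :: "nat \<Rightarrow> (nat \<Rightarrow> 'a) \<Rightarrow> (nat \<Rightarrow> 'a set set) \<Rightarrow> nat \<Rightarrow> nat \<Rightarrow> nat set" where
  "Dset N v G i t = (if t = 0 then {i} else cint N i (state N v G i t))"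

definition elim_step :: "(nat \<Rightarrow> nat set) \<Rightarrow> (nat set \<times> nat set) set" where
  "elim_step D = {(B, B'). \<exists>i\<in>B. D i \<subseteq> (\<Union>j\<in>B - {i}. D j) \<and> B' = B - {i}}"

definition elim_result :: "(nat \<Rightarrow> nat set) \<Rightarrow> nat set \<Rightarrow> nat set \<Rightarrow> bool" where
  "elim_result D B B' \<longleftrightarrow> (B, B') \<in> (elim_step D)\<^sup>* \<and> (\<nexists>B''. (B', B'') \<in> elim_step D)"

end

theory Submission
  imports Defs
begin

(* After the elimination phase at a time t \<ge> 1 the surviving agents form an irredundant family
   of arcs D_i(t) of the cycle 1, ..., N: no arc is covered by the others.  Hence every arc owns a
   point lying on no other arc, and no point lies on three arcs, since of three arcs through p the
   one reaching farthest back from p and the one reaching farthest forward from p cover the third.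
   Counting incidences point by point gives  \<Sum>|D_i(t)| \<le> 2N - #(points on exactly one arc)
   \<le> 2N - |A(t)|.  The tree, the tour and the graphs G_t matter only in that each D_i(t) is an
   arc of the cycle. *)

definition irredundant :: "('i \<Rightarrow> 'p set) \<Rightarrow> 'i set \<Rightarrow> bool" where
  "irredundant D B \<longleftrightarrow> (\<forall>i\<in>B. \<not> D i \<subseteq> (\<Union>j\<in>B - {i}. D j))"

lemma sum_card_plus_card_le_if_irredundant:
  fixes D :: "'i \<Rightarrow> 'p set"
  assumes "finite P" "finite B" and sub: "\<forall>i\<in>B. D i \<subseteq> P"
    and mult: "\<forall>p\<in>P. card {i\<in>B. p \<in> D i} \<le> 2"
    and irr: "irredundant D B"
  shows "(\<Sum>i\<in>B. card (D i)) + card B \<le> 2 * card P"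
proof -
  define m where "m p = card {i\<in>B. p \<in> D i}" for p
  define P1 where "P1 = {p\<in>P. m p = 1}"
  have "\<forall>i\<in>B. \<exists>p\<in>D i. \<forall>j\<in>B - {i}. p \<notin> D j"
    using irr unfolding irredundant_def by blast
  then obtain priv where priv: "\<And>i. i \<in> B \<Longrightarrow> priv i \<in> D i \<and> (\<forall>j\<in>B - {i}. priv i \<notin> D j)"
    by metis
  have "inj_on priv B"
  proof (rule inj_onI)
    fix i j assume ij: "i \<in> B" "j \<in> B" "priv i = priv j"
    show "i = j"
    proof (rule ccontr)
      assume "i \<noteq> j"
      then have "priv j \<notin> D i" using priv[OF ij(2)] ij(1) by blast
      then show False using priv[OF ij(1)] ij(3) by simp
    qed
  qed
  moreover have "priv ` B \<subseteq> P1"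
  proof
    fix p assume "p \<in> priv ` B"
    then obtain i where i: "i \<in> B" "p = priv i" by blast
    then have "{j\<in>B. p \<in> D j} = {i}" using priv by blast
    moreover have "p \<in> P" using i priv sub by blast
    ultimately show "p \<in> P1" by (simp add: P1_def m_def)
  qed
  ultimately have "card B \<le> card P1"
    using \<open>finite P\<close> by (intro card_inj_on_le) (auto simp: P1_def)
  moreover have "(\<Sum>i\<in>B. card (D i)) = (\<Sum>p\<in>P. m p)"
  proof -
    have "(\<Sum>i\<in>B. card (D i)) = (\<Sum>i\<in>B. card {p\<in>P. p \<in> D i})"
      using sub by (intro sum.cong refl arg_cong[where f = card]) blast
    also have "\<dots> = (\<Sum>p\<in>P. m p)"
      using assms(1,2) by (intro sum_multicount_gen) (auto simp: m_def)
    finally show ?thesis .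
  qed
  moreover have "(\<Sum>p\<in>P. m p) + card P1 = (\<Sum>p\<in>P. m p + (if m p = 1 then 1 else 0))"
    using \<open>finite P\<close> by (simp add: sum.distrib P1_def sum.inter_filter[symmetric])
  moreover have "\<dots> \<le> (\<Sum>p\<in>P. 2)"
    using mult by (intro sum_mono) (auto simp: m_def)
  ultimately show ?thesis by simp
qed

lemma cint_subset: "i \<in> {1..N} \<Longrightarrow> j \<in> {1..N} \<Longrightarrow> cint N i j \<subseteq> {1..N}"
  by (auto simp: cint_def)

(* number of forward steps from i to x on the cycle; adding N first avoids truncated subtraction *)
definition cyc_dist :: "nat \<Rightarrow> nat \<Rightarrow> nat \<Rightarrow> nat" where
  "cyc_dist N i x = (x + N - i) mod N"

lemma cyc_dist_eq:
  assumes "i \<in> {1..N}" "x \<in> {1..N}"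
  shows "cyc_dist N i x = (if i \<le> x then x - i else x + N - i)"
proof (cases "i \<le> x")
  case True
  then have "x + N - i = (x - i) + N" by simp
  moreover have "x - i < N" using assms by auto
  ultimately show ?thesis using True unfolding cyc_dist_def by (simp only: mod_add_self2) simp
qed (use assms in \<open>simp add: cyc_dist_def\<close>)

lemma mem_cint_iff_around:
  assumes "i \<in> {1..N}" "j \<in> {1..N}" "p \<in> {1..N}" "x \<in> {1..N}" and "p \<in> cint N i j"
  shows "x \<in> cint N i j \<longleftrightarrow> cyc_dist N p x \<le> cyc_dist N p j \<or> cyc_dist N x p \<le> cyc_dist N i p"
  using assms by (auto simp: cint_def cyc_dist_eq split: if_splits)

lemma cint_subset_Un_extremal:
  assumes range: "i \<in> {1..N}" "j \<in> {1..N}" "l \<in> {1..N}" "jl \<in> {1..N}"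
      "r \<in> {1..N}" "jr \<in> {1..N}" "p \<in> {1..N}"
    and through: "p \<in> cint N i j" "p \<in> cint N l jl" "p \<in> cint N r jr"
    and left: "cyc_dist N i p \<le> cyc_dist N l p"
    and right: "cyc_dist N p j \<le> cyc_dist N p jr"
  shows "cint N i j \<subseteq> cint N l jl \<union> cint N r jr"
proof
  fix x assume x: "x \<in> cint N i j"
  then have x_range: "x \<in> {1..N}" using cint_subset range by blast
  have "cyc_dist N p x \<le> cyc_dist N p j \<or> cyc_dist N x p \<le> cyc_dist N i p"
    using mem_cint_iff_around[OF range(1,2,7) x_range through(1)] x by blast
  then have "cyc_dist N p x \<le> cyc_dist N p jr \<or> cyc_dist N x p \<le> cyc_dist N l p"
    using left right by linarith
  then show "x \<in> cint N l jl \<union> cint N r jr"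
    using mem_cint_iff_around[OF range(3,4,7) x_range through(2)]
      mem_cint_iff_around[OF range(5,6,7) x_range through(3)] by blast
qed

lemma card_irredundant_arcs_through_le_2:
  assumes B: "B \<subseteq> {1..N}" and s: "\<forall>i\<in>B. s i \<in> {1..N}"
    and irr: "irredundant (\<lambda>i. cint N i (s i)) B" and p: "p \<in> {1..N}"
  shows "card {i\<in>B. p \<in> cint N i (s i)} \<le> 2"
proof (rule ccontr)
  define S where "S = {i\<in>B. p \<in> cint N i (s i)}"
  assume "\<not> card {i\<in>B. p \<in> cint N i (s i)} \<le> 2"
  then have "card S \<ge> 3" by (simp add: S_def)
  then obtain k0 where "k0 \<in> S" by force
  have "N > 0" using p by simp
  then have bounded: "cyc_dist N a b < N" for a b by (simp add: cyc_dist_def)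
  obtain l where l: "l \<in> S" "\<forall>i\<in>S. cyc_dist N i p \<le> cyc_dist N l p"
    using ex_has_greatest_nat[of "\<lambda>i. i \<in> S" k0 "\<lambda>i. cyc_dist N i p" N] \<open>k0 \<in> S\<close> bounded by blast
  obtain r where r: "r \<in> S" "\<forall>i\<in>S. cyc_dist N p (s i) \<le> cyc_dist N p (s r)"
    using ex_has_greatest_nat[of "\<lambda>i. i \<in> S" k0 "\<lambda>i. cyc_dist N p (s i)" N] \<open>k0 \<in> S\<close> bounded by blast
  have "card {l, r} \<le> 2" by (simp add: card_insert_if)
  then have "\<not> S \<subseteq> {l, r}" using card_mono[of "{l, r}" S] \<open>card S \<ge> 3\<close> by auto
  then obtain k where k: "k \<in> S" "k \<noteq> l" "k \<noteq> r" by blast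
  have "cint N k (s k) \<subseteq> cint N l (s l) \<union> cint N r (s r)"
    using k(1) l r B s p by (intro cint_subset_Un_extremal) (auto simp: S_def)
  then show False
    using irr k l(1) r(1) unfolding irredundant_def S_def by blast
qed

lemma sum_card_irredundant_arcs_le:
  assumes B: "B \<subseteq> {1..N}" and s: "\<forall>i\<in>B. s i \<in> {1..N}"
    and irr: "irredundant (\<lambda>i. cint N i (s i)) B"
  shows "(\<Sum>i\<in>B. card (cint N i (s i))) + card B \<le> 2 * N"
proof -
  have "(\<Sum>i\<in>B. card (cint N i (s i))) + card B \<le> 2 * card {1..N}"
  proof (rule sum_card_plus_card_le_if_irredundant)
    show "finite B" using B finite_subset by blast
    show "\<forall>i\<in>B. cint N i (s i) \<subseteq> {1..N}" using B s cint_subset by blast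
    show "\<forall>p\<in>{1..N}. card {i\<in>B. p \<in> cint N i (s i)} \<le> 2"
      using B s irr card_irredundant_arcs_through_le_2 by blast
  qed (use irr in auto)
  then show ?thesis by simp
qed

lemma elim_steps_subset: "(B, B') \<in> (elim_step D)\<^sup>* \<Longrightarrow> B' \<subseteq> B"
  by (induction rule: rtrancl_induct) (auto simp: elim_step_def)

lemma elim_result_subset: "elim_result D B B' \<Longrightarrow> B' \<subseteq> B"
  unfolding elim_result_def using elim_steps_subset by blast

lemma elim_result_irredundant: "elim_result D B B' \<Longrightarrow> irredundant D B'"
  unfolding elim_result_def elim_step_def irredundant_def by blast

lemma elim_results_subset_initial:
  fixes t N :: nat
  assumes "\<forall>t\<in>{1..N}. elim_result (D t) (A (t - 1)) (A t)"
  shows "t \<le> N \<Longrightarrow> A t \<subseteq> A 0"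
proof (induction t)
  case (Suc t)
  then have "A (Suc t) \<subseteq> A t" using assms(1) elim_result_subset by fastforce
  then show ?case using Suc by simp
qed simp

lemma state_in_range: "i \<in> {1..N} \<Longrightarrow> state N v G i t \<in> {1..N}"
  by (induction t) (auto simp: Let_def Suc_le_eq)

theorem lemma7:
  fixes V :: "'a set" and n k N :: nat and ET :: "'a set set" and r :: 'a
    and v :: "nat \<Rightarrow> 'a" and G :: "nat \<Rightarrow> 'a set set" and A :: "nat \<Rightarrow> nat set"
  assumes "finite V" and "card V = n" and "n \<ge> 2"
    and "tree_on V ET"
    and "N = 2 * (n - 1)"
    and "r \<in> V"
    and "dfs_tour ET r N v"
    and "\<forall>t\<in>{1..N}. graph_on V (G t) \<and> card (ET - G t) \<le> k"
    and "A 0 = {1..N}"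
    and "\<forall>t\<in>{1..N}. elim_result (\<lambda>i. Dset N v G i t) (A (t - 1)) (A t)"
  shows "\<forall>t\<in>{1..N}. (\<Sum>i\<in>A t. card (Dset N v G i t)) \<le> 2 * N - card (A t)"
proof
  fix t assume t: "t \<in> {1..N}"
  have D: "Dset N v G i t = cint N i (state N v G i t)" for i
    using t by (simp add: Dset_def)
  have B: "A t \<subseteq> {1..N}"
    using elim_results_subset_initial[OF assms(10)] assms(9) t by auto
  have "elim_result (\<lambda>i. Dset N v G i t) (A (t - 1)) (A t)"
    using assms(10) t by blast
  then have "irredundant (\<lambda>i. cint N i (state N v G i t)) (A t)"
    unfolding D by (rule elim_result_irredundant)
  then have "(\<Sum>i\<in>A t. card (Dset N v G i t)) + card (A t) \<le> 2 * N"
    unfolding D using B state_in_range by (intro sum_card_irredundant_arcs_le) blast+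
  then show "(\<Sum>i\<in>A t. card (Dset N v G i t)) \<le> 2 * N - card (A t)" by linarith
qed

end
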